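(* Assume the inverse theorem $\mathrm{GI}(s)$: for every $s\ge1$, $\delta>0$ there are $C,c>0$ such that any $f:[N]\to\mathbb{C}$ with $|f|\le1$ and $\|f\|_{U^{s+1}[N]}\ge\delta$ has $|\mathbb{E}_{n\in[N]}f(n)\overline{\psi(n)}|\ge c$ for some degree $\le s$ polynomial nilsequence $\psi$ of complexity $\le C$. Then for every $s\ge1$ and $\delta>0$ there exist a growth function $\Phi_{s,\delta}$ and $c'=c'(s,\delta)>0$ such that for every $N$ and every $f:[N]\to[-1,1]$ with $\|f\|_{U^{s+1}[N]}\ge\delta$ there is a set $E\subseteq[N]$ which is $s$-measurable with growth function $\Phi_{s,\delta}$ and satisfies $|\mathbb{E}_{n\in[N]}f(n)1_E(n)|\ge c'$.
   Context: A growth function is a monotone increasing $\Phi:\mathbb{R}^+\to\mathbb{R}^+$ with $\Phi(M)\ge M$. A degree $\le s$ polynomial nilsequence of complexity $\le M$ is $\psi(n)=F(g(n)\Gamma)$ where $(G/\Gamma,G_\bullet)$ is a filtered nilmanifold of degree $\le s$ and complexity $\le M$ (connected simply connected nilpotent Lie group $G$, discrete cocompact $\Gamma$, rational filtration $G=G_{(0)}=G_{(1)}\ge G_{(2)}\ge\cdots$ with $[G_{(i)},G_{(j)}]\subseteq G_{(i+j)}$, $G_{(i)}=\{\mathrm{id}\}$ for $i>s$, adapted Mal'cev basis defining a metric; complexity bounds dimension, degree and rationality of the basis), $g:\mathbb{Z}\to G$ is a polynomial sequence adapted to $G_\bullet$ (i.e. $\partial_{h_1}\cdots\partial_{h_i}g(n)\in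 G_{(i)}$, $\partial_hg(n)=g(n+h)g(n)^{-1}$), and $F:G/\Gamma\to\mathbb{C}$ has Lipschitz norm $\le M$. A set $E\subseteq[N]$ is $s$-measurable with growth function $\Phi$ if for every $M\ge1$ there is a degree $\le s$ polynomial nilsequence $\psi:\mathbb{Z}\to[0,1]$ of complexity $\le\Phi(M)$ with $\|\psi-1_E\|_{L^2[N]}\le1/M$, where $\|f\|_{L^2[N]}=(\mathbb{E}_{n\in[N]}|f(n)|^2)^{1/2}$. Gowers norms $\|\cdot\|_{U^{k}[N]}$ are defined by extending by zero into $\mathbb{Z}/\tilde N\mathbb{Z}$, $\tilde N\ge 2^kN$, and normalising by $\|1_{[N]}\|_{U^k}$, with $\|f\|_{U^k(G)}^{2^k}=\mathbb{E}_{x,h_1..h_k}\Delta_{h_1}\cdots\Delta_{h_k}f(x)$, $\Delta_hf(x)=f(x+h)\overline{f(x)}$. *)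

theory Defs
  imports Complex_Main "HOL-Library.Indicator_Function"
begin

section \<open>Real matrices of size n x n (entries outside the n x n block are zero)\<close>

type_synonym mat = "nat \<Rightarrow> nat \<Rightarrow> real"

definition mid :: "nat \<Rightarrow> mat" where
  "mid n = (\<lambda>i j. if i = j \<and> i < n then 1 else 0)"

definition mmul :: "nat \<Rightarrow> mat \<Rightarrow> mat \<Rightarrow> mat" where
  "mmul n A B = (\<lambda>i j. if i < n \<and> j < n then (\<Sum>k<n. A i k * B k j) else 0)"

fun mpow :: "nat \<Rightarrow> mat \<Rightarrow> nat \<Rightarrow> mat" where
  "mpow n A 0 = mid n"
| "mpow n A (Suc k) = mmul n A (mpow n A k)"

text \<open>Matrix exponential of a nilpotent n x n matrix (the series terminates).\<close>
definition mexp :: "nat \<Rightarrow> mat \<Rightarrow> mat" where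
  "mexp n A = (\<lambda>i j. \<Sum>k<n. mpow n A k i j / fact k)"

text \<open>Inverse of a unipotent n x n matrix A = I + N: sum of (I - A)^k.\<close>
definition minv :: "nat \<Rightarrow> mat \<Rightarrow> mat" where
  "minv n A = (\<lambda>i j. \<Sum>k<n. mpow n (\<lambda>a b. mid n a b - A a b) k i j)"

definition mbracket :: "nat \<Rightarrow> mat \<Rightarrow> mat \<Rightarrow> mat" where
  "mbracket n A B = (\<lambda>i j. mmul n A B i j - mmul n B A i j)"

definition strict_upper :: "nat \<Rightarrow> mat \<Rightarrow> bool" where
  "strict_upper n A \<longleftrightarrow> (\<forall>i j. (j \<le> i \<or> n \<le> j) \<longrightarrow> A i j = 0)"

definition lincomb :: "(nat \<Rightarrow> mat) \<Rightarrow> (nat \<Rightarrow> real) \<Rightarrow> nat set \<Rightarrow> mat" where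
  "lincomb X t K = (\<lambda>i j. \<Sum>k\<in>K. t k * X k i j)"

section \<open>Mal'cev data: basis X_0,...,X_(m-1) of a Lie algebra of strictly upper triangular matrices\<close>

definition coords :: "nat \<Rightarrow> (nat \<Rightarrow> real) set" where
  "coords m = {t. \<forall>i\<ge>m. t i = 0}"

text \<open>the span h_j of X_j,...,X_(m-1); the Lie algebra is h_0\<close>
definition hsp :: "nat \<Rightarrow> (nat \<Rightarrow> mat) \<Rightarrow> nat \<Rightarrow> mat set" where
  "hsp m X j = {lincomb X t {j..<m} | t. True}"

definition Hgrp :: "nat \<Rightarrow> nat \<Rightarrow> (nat \<Rightarrow> mat) \<Rightarrow> nat \<Rightarrow> mat set" where
  "Hgrp n m X j = mexp n ` hsp m X j"

definition Ggrp :: "nat \<Rightarrow> nat \<Rightarrow> (nat \<Rightarrow> mat) \<Rightarrow> mat set" where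
  "Ggrp n m X = Hgrp n m X 0"

fun prodexp :: "nat \<Rightarrow> (nat \<Rightarrow> mat) \<Rightarrow> (nat \<Rightarrow> real) \<Rightarrow> nat \<Rightarrow> mat" where
  "prodexp n X t 0 = mid n"
| "prodexp n X t (Suc k) = mmul n (prodexp n X t k) (mexp n (\<lambda>i j. t k * X k i j))"

definition Gam :: "nat \<Rightarrow> nat \<Rightarrow> (nat \<Rightarrow> mat) \<Rightarrow> mat set" where
  "Gam n m X = (\<lambda>t. prodexp n X t m) ` {t \<in> coords m. \<forall>i. t i \<in> \<int>}"

definition Gfil :: "nat \<Rightarrow> nat \<Rightarrow> (nat \<Rightarrow> mat) \<Rightarrow> (nat \<Rightarrow> nat) \<Rightarrow> nat \<Rightarrow> mat set" where
  "Gfil n m X js i = Hgrp n m X (js i)"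

text \<open>A filtered nilmanifold G/Gamma of degree d with Mal'cev basis X adapted to the filtration,
  with structure constants c (GT, Def. 2.1).\<close>
definition malcev_nilmanifold ::
  "nat \<Rightarrow> nat \<Rightarrow> (nat \<Rightarrow> mat) \<Rightarrow> (nat \<Rightarrow> nat \<Rightarrow> nat \<Rightarrow> real) \<Rightarrow> (nat \<Rightarrow> nat) \<Rightarrow> nat \<Rightarrow> bool" where
  "malcev_nilmanifold n m X c js d \<longleftrightarrow>
     (\<forall>k<m. strict_upper n (X k))
   \<and> (\<forall>t \<in> coords m. lincomb X t {..<m} = (\<lambda>i j. 0) \<longrightarrow> (\<forall>k. t k = 0))
   \<and> (\<forall>i<m. \<forall>j<m. mbracket n (X i) (X j) = lincomb X (c i j) {..<m})
   \<and> (\<forall>j\<le>m. \<forall>A\<in>hsp m X 0. \<forall>B\<in>hsp m X j. mbracket n A B \<in> hsp m X j)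
   \<and> (\<forall>t\<in>coords m. prodexp n X t m \<in> Ggrp n m X)
   \<and> (\<forall>x\<in>Ggrp n m X. \<exists>!t. t \<in> coords m \<and> prodexp n X t m = x)
   \<and> (\<forall>x\<in>Gam n m X. \<forall>y\<in>Gam n m X. mmul n x y \<in> Gam n m X \<and> minv n x \<in> Gam n m X)
   \<and> js 0 = 0 \<and> js 1 = 0 \<and> mono js \<and> (\<forall>i. js i \<le> m) \<and> (\<forall>i>d. js i = m)
   \<and> (\<forall>i j. \<forall>x\<in>Gfil n m X js i. \<forall>y\<in>Gfil n m X js j.
        mmul n (mmul n x y) (mmul n (minv n x) (minv n y)) \<in> Gfil n m X js (i + j))"

definition rat_height_le :: "real \<Rightarrow> real \<Rightarrow> bool" where
  "rat_height_le M r \<longleftrightarrow> (\<exists>a b::int. b > 0 \<and> r = of_int a / of_int b \<and> of_int \<bar>a\<bar> \<le> M \<and> of_int b \<le> M)"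

definition nil_complexity_le :: "real \<Rightarrow> nat \<Rightarrow> (nat \<Rightarrow> nat \<Rightarrow> nat \<Rightarrow> real) \<Rightarrow> nat \<Rightarrow> bool" where
  "nil_complexity_le M m c d \<longleftrightarrow> real m \<le> M \<and> real d \<le> M
     \<and> (\<forall>i<m. \<forall>j<m. \<forall>k<m. rat_height_le M (c i j k))"

definition malcev_coord :: "nat \<Rightarrow> nat \<Rightarrow> (nat \<Rightarrow> mat) \<Rightarrow> mat \<Rightarrow> (nat \<Rightarrow> real)" where
  "malcev_coord n m X x = (THE t. t \<in> coords m \<and> prodexp n X t m = x)"

definition supnorm :: "nat \<Rightarrow> (nat \<Rightarrow> real) \<Rightarrow> real" where
  "supnorm m t = Max (insert 0 {\<bar>t i\<bar> | i. i < m})"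

definition dG :: "nat \<Rightarrow> nat \<Rightarrow> (nat \<Rightarrow> mat) \<Rightarrow> mat \<Rightarrow> mat \<Rightarrow> real" where
  "dG n m X x y = Inf {(\<Sum>i<k. min (supnorm m (malcev_coord n m X (mmul n (xs i) (minv n (xs (Suc i))))))
                                 (supnorm m (malcev_coord n m X (mmul n (xs (Suc i)) (minv n (xs i))))))
                       | k xs. xs 0 = x \<and> xs k = y \<and> (\<forall>i\<le>k. xs i \<in> Ggrp n m X)}"

definition dQ :: "nat \<Rightarrow> nat \<Rightarrow> (nat \<Rightarrow> mat) \<Rightarrow> mat \<Rightarrow> mat \<Rightarrow> real" where
  "dQ n m X x y = Inf {dG n m X (mmul n x \<gamma>) (mmul n y \<gamma>') | \<gamma> \<gamma>'. \<gamma> \<in> Gam n m X \<and> \<gamma>' \<in> Gam n m X}"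

text \<open>F : G/Gamma -> C (as a right-Gamma-invariant function on G) with Lipschitz norm at most M\<close>
definition lip_on_nilmanifold_le :: "real \<Rightarrow> nat \<Rightarrow> nat \<Rightarrow> (nat \<Rightarrow> mat) \<Rightarrow> (mat \<Rightarrow> complex) \<Rightarrow> bool" where
  "lip_on_nilmanifold_le M n m X F \<longleftrightarrow>
     (\<forall>x\<in>Ggrp n m X. \<forall>\<gamma>\<in>Gam n m X. F (mmul n x \<gamma>) = F x)
   \<and> (\<exists>A L. 0 \<le> A \<and> 0 \<le> L \<and> A + L \<le> M
        \<and> (\<forall>x\<in>Ggrp n m X. cmod (F x) \<le> A)
        \<and> (\<forall>x\<in>Ggrp n m X. \<forall>y\<in>Ggrp n m X. cmod (F x - F y) \<le> L * dQ n m X x y))"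

fun iter_deriv :: "nat \<Rightarrow> int list \<Rightarrow> (int \<Rightarrow> mat) \<Rightarrow> int \<Rightarrow> mat" where
  "iter_deriv n [] g = g"
| "iter_deriv n (h # hs) g = (\<lambda>x. mmul n (iter_deriv n hs g (x + h)) (minv n (iter_deriv n hs g x)))"

definition poly_seq :: "nat \<Rightarrow> nat \<Rightarrow> (nat \<Rightarrow> mat) \<Rightarrow> (nat \<Rightarrow> nat) \<Rightarrow> (int \<Rightarrow> mat) \<Rightarrow> bool" where
  "poly_seq n m X js g \<longleftrightarrow> (\<forall>hs x. iter_deriv n hs g x \<in> Gfil n m X js (length hs))"

definition poly_nilseq :: "nat \<Rightarrow> real \<Rightarrow> (int \<Rightarrow> complex) \<Rightarrow> bool" where
  "poly_nilseq s M \<psi> \<longleftrightarrow>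
    (\<exists>n m X c js d g F. d \<le> s \<and> malcev_nilmanifold n m X c js d \<and> nil_complexity_le M m c d
        \<and> poly_seq n m X js g \<and> lip_on_nilmanifold_le M n m X F \<and> \<psi> = (\<lambda>x. F (g x)))"

definition ext_ZN :: "nat \<Rightarrow> nat \<Rightarrow> (int \<Rightarrow> complex) \<Rightarrow> int \<Rightarrow> complex" where
  "ext_ZN N Nt f x = (let y = x mod int Nt in if 1 \<le> y \<and> y \<le> int N then f y else 0)"

fun Dlt :: "int list \<Rightarrow> (int \<Rightarrow> complex) \<Rightarrow> int \<Rightarrow> complex" where
  "Dlt [] f = f"
| "Dlt (h # hs) f = (\<lambda>x. Dlt hs f (x + h) * cnj (Dlt hs f x))"

definition gowers_cyc :: "nat \<Rightarrow> nat \<Rightarrow> (int \<Rightarrow> complex) \<Rightarrow> real" where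
  "gowers_cyc k Nt F =
     (Re ((\<Sum>x\<in>{0..<int Nt}. \<Sum>hs\<in>{hs. length hs = k \<and> set hs \<subseteq> {0..<int Nt}}. Dlt hs F x)
          / of_nat Nt ^ (k + 1))) powr (1 / 2 ^ k)"

definition gowersN :: "nat \<Rightarrow> nat \<Rightarrow> (int \<Rightarrow> complex) \<Rightarrow> real" where
  "gowersN k N f = gowers_cyc k (2 ^ k * N) (ext_ZN N (2 ^ k * N) f)
                 / gowers_cyc k (2 ^ k * N) (ext_ZN N (2 ^ k * N) (\<lambda>_. 1))"

definition growth_function :: "(real \<Rightarrow> real) \<Rightarrow> bool" where
  "growth_function \<Phi> \<longleftrightarrow> mono_on {0<..} \<Phi> \<and> (\<forall>M>0. \<Phi> M > 0 \<and> \<Phi> M \<ge> M)"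

definition L2dist :: "nat \<Rightarrow> (int \<Rightarrow> complex) \<Rightarrow> (int \<Rightarrow> complex) \<Rightarrow> real" where
  "L2dist N f g = sqrt ((\<Sum>n\<in>{1..int N}. (cmod (f n - g n))\<^sup>2) / real N)"

definition s_measurable :: "nat \<Rightarrow> (real \<Rightarrow> real) \<Rightarrow> nat \<Rightarrow> int set \<Rightarrow> bool" where
  "s_measurable s \<Phi> N E \<longleftrightarrow> E \<subseteq> {1..int N} \<and>
     (\<forall>M\<ge>1. \<exists>\<psi>. poly_nilseq s (\<Phi> M) \<psi> \<and> (\<forall>x. \<psi> x \<in> complex_of_real ` {0..1})
              \<and> L2dist N \<psi> (\<lambda>n. of_real (indicator E n)) \<le> 1 / M)"

definition GI :: bool where
  "GI \<longleftrightarrow> (\<forall>s\<ge>1. \<forall>\<delta>>0. \<exists>C>0. \<exists>c>0. \<forall>N\<ge>1. \<forall>f :: int \<Rightarrow> complex.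
      (\<forall>n\<in>{1..int N}. cmod (f n) \<le> 1) \<longrightarrow> gowersN (s + 1) N f \<ge> \<delta> \<longrightarrow>
      (\<exists>\<psi>. poly_nilseq s C \<psi> \<and> cmod ((\<Sum>n\<in>{1..int N}. f n * cnj (\<psi> n)) / of_nat N) \<ge> c))"

end

theory Submission
  imports Defs
begin

(* The inverse theorem gives a nilsequence psi of bounded complexity correlating with f. As f is real,
   it then correlates with one of the four nonnegative 1-Lipschitz parts max (+-Re psi) 0,
   max (+-Im psi) 0; call it x, with values in [0, C]. Writing x as an average of the indicators of its
   superlevel sets {x > t} over a fine grid of thresholds t, f correlates with {x > t} for a positive
   proportion of the grid, while a union bound shows that for most grid points every window
   t < x < t + eps_k contains at most N/k^2 points. For such a t the set E = {x > t} lies within 1/k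
   in L^2 of the nilsequence clamp ((x - t) / eps_k), whose Lipschitz constant C/eps_k dictates the
   growth function. *)

lemma card_grid_below:
  fixes h x :: real
  assumes h: "h > 0" and x: "0 \<le> x" "x \<le> real J * h"
  shows "\<bar>h * real (card {j. j < J \<and> real j * h < x}) - x\<bar> \<le> h"
proof -
  define y where "y = x / h"
  have hy: "h * y = x" using h by (simp add: y_def)
  have below: "real j * h < x \<longleftrightarrow> j < nat \<lceil>y\<rceil>" for j
  proof -
    have "real j * h < x \<longleftrightarrow> real j < y" using h hy by (metis mult.commute mult_less_cancel_left_pos)
    then show ?thesis by (simp add: zless_nat_eq_int_zless less_ceiling_iff)
  qed
  have le: "nat \<lceil>y\<rceil> \<le> J"
  proof -
    have "y \<le> real J" using x h by (simp add: y_def divide_le_eq)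
    then show ?thesis by (simp add: nat_le_iff ceiling_le_iff)
  qed
  have "{j. j < J \<and> real j * h < x} = {..< nat \<lceil>y\<rceil>}"
    unfolding below using order.strict_trans2[OF _ le] by blast
  moreover have "real (nat \<lceil>y\<rceil>) = of_int \<lceil>y\<rceil>" using x h by (simp add: y_def)
  moreover have "x \<le> h * of_int \<lceil>y\<rceil>" "h * of_int \<lceil>y\<rceil> < x + h"
  proof -
    have "h * y \<le> h * of_int \<lceil>y\<rceil>" using h by (intro mult_left_mono) auto
    moreover have "h * of_int \<lceil>y\<rceil> < h * (y + 1)" using h by (intro mult_strict_left_mono) linarith+
    ultimately show "x \<le> h * of_int \<lceil>y\<rceil>" "h * of_int \<lceil>y\<rceil> < x + h"
      using hy by (auto simp: distrib_left)
  qed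
  ultimately show ?thesis by simp
qed

lemma card_grid_window:
  fixes h e x :: real
  assumes h: "h > 0" and e: "e \<ge> 0"
  shows "real (card {j. j < J \<and> x - e < real j * h \<and> real j * h < x}) \<le> e / h + 1"
proof -
  let ?S = "{j. j < J \<and> x - e < real j * h \<and> real j * h < x}"
  define a where "a = (x - e) / h"
  define b where "b = x / h"
  have "int ` ?S \<subseteq> {\<lfloor>a\<rfloor> + 1 .. \<lceil>b\<rceil> - 1}"
  proof
    fix z assume "z \<in> int ` ?S"
    then obtain j where j: "j \<in> ?S" "z = int j" by auto
    then have "a < real j" "real j < b" using h by (auto simp: a_def b_def field_simps)
    then have "\<lfloor>a\<rfloor> < int j" "int j < \<lceil>b\<rceil>" by (simp_all add: floor_less_iff less_ceiling_iff)
    then show "z \<in> {\<lfloor>a\<rfloor> + 1 .. \<lceil>b\<rceil> - 1}" using j by auto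
  qed
  then have "card (int ` ?S) \<le> card {\<lfloor>a\<rfloor> + 1 .. \<lceil>b\<rceil> - 1}" by (intro card_mono) auto
  moreover have "card (int ` ?S) = card ?S" by (intro card_image) (simp add: inj_on_def)
  ultimately have "card ?S \<le> nat (\<lceil>b\<rceil> - \<lfloor>a\<rfloor> - 1)" by simp
  then have "real (card ?S) \<le> real (nat (\<lceil>b\<rceil> - \<lfloor>a\<rfloor> - 1))" by (rule of_nat_mono)
  also have "\<dots> \<le> max 0 (of_int \<lceil>b\<rceil> - of_int \<lfloor>a\<rfloor> - 1)"
    by (cases "\<lceil>b\<rceil> - \<lfloor>a\<rfloor> - 1 \<ge> 0") auto
  also have "\<dots> \<le> max 0 (b - a + 1)" by linarith
  also have "b - a = e / h" using h by (simp add: a_def b_def field_simps)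
  finally show ?thesis using e h by simp
qed

lemma card_filter_eq_sum_of_bool:
  "finite A \<Longrightarrow> real (card {n\<in>A. P n}) = (\<Sum>n\<in>A. of_bool (P n))"
  by (simp add: Int_def conj_commute)

lemma grid_layer_cake:
  fixes f x :: "'a \<Rightarrow> real"
  assumes A: "finite A" and h: "h > 0"
    and x: "\<forall>n\<in>A. 0 \<le> x n \<and> x n \<le> real J * h" and f: "\<forall>n\<in>A. \<bar>f n\<bar> \<le> 1"
  shows "\<bar>h * (\<Sum>j<J. \<Sum>n\<in>A. f n * of_bool (real j * h < x n)) - (\<Sum>n\<in>A. f n * x n)\<bar>
           \<le> real (card A) * h"
proof -
  define cnt where "cnt n = real (card {j\<in>{..<J}. real j * h < x n})" for n
  have "(\<Sum>j<J. \<Sum>n\<in>A. f n * of_bool (real j * h < x n)) = (\<Sum>n\<in>A. f n * cnt n)"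
    by (simp only: sum.swap[of _ "{..<J}"] cnt_def card_filter_eq_sum_of_bool sum_distrib_left finite_lessThan)
  then have "h * (\<Sum>j<J. \<Sum>n\<in>A. f n * of_bool (real j * h < x n)) - (\<Sum>n\<in>A. f n * x n)
      = (\<Sum>n\<in>A. f n * (h * cnt n - x n))"
    by (simp add: sum_distrib_left sum_subtractf algebra_simps)
  also have "\<bar>\<dots>\<bar> \<le> (\<Sum>n\<in>A. \<bar>f n\<bar> * \<bar>h * cnt n - x n\<bar>)"
    unfolding abs_mult[symmetric] by (rule sum_abs)
  also have "\<dots> \<le> (\<Sum>n\<in>A. 1 * h)"
  proof (intro sum_mono mult_mono)
    fix n assume "n \<in> A"
    then show "\<bar>h * cnt n - x n\<bar> \<le> h"
      using card_grid_below[OF h, of "x n" J] x by (simp add: cnt_def)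
  qed (use f in auto)
  finally show ?thesis by simp
qed

lemma card_correlating_thresholds:
  fixes f x :: "'a \<Rightarrow> real"
  assumes A: "finite A" "A \<noteq> {}" and a: "a > 0" and h: "h > 0" and C: "C > 0" "real J * h = C"
    and x: "\<forall>n\<in>A. 0 \<le> x n \<and> x n \<le> C" and f: "\<forall>n\<in>A. \<bar>f n\<bar> \<le> 1"
    and corr: "a * real (card A) \<le> \<bar>\<Sum>n\<in>A. f n * x n\<bar>"
  shows "a / 2 - h \<le> h * real (card {j. j < J \<and>
           a * real (card A) / (2 * C) \<le> \<bar>\<Sum>n\<in>A. f n * of_bool (real j * h < x n)\<bar>})"
proof -
  define N where "N = real (card A)"
  define \<phi> where "\<phi> j = (\<Sum>n\<in>A. f n * of_bool (real j * h < x n))" for j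
  define th where "th = a * N / (2 * C)"
  define G where "G = {j. j < J \<and> th \<le> \<bar>\<phi> j\<bar>}"
  have N: "N > 0" using A by (simp add: N_def card_gt_0_iff)
  have \<phi>_le: "\<bar>\<phi> j\<bar> \<le> N" for j
  proof -
    have "\<bar>\<phi> j\<bar> \<le> (\<Sum>n\<in>A. \<bar>f n * of_bool (real j * h < x n)\<bar>)" unfolding \<phi>_def by (rule sum_abs)
    also have "\<dots> \<le> (\<Sum>n\<in>A. 1)" using f by (intro sum_mono) (simp add: abs_mult)
    finally show ?thesis by (simp add: N_def)
  qed
  have "\<bar>\<Sum>j<J. \<phi> j\<bar> \<le> (\<Sum>j<J. \<bar>\<phi> j\<bar>)" by (rule sum_abs)
  also have "\<dots> \<le> (\<Sum>j<J. of_bool (j \<in> G) * N + th)"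
  proof (intro sum_mono)
    fix j assume "j \<in> {..<J}"
    moreover have "0 \<le> th" using a C N by (simp add: th_def)
    ultimately show "\<bar>\<phi> j\<bar> \<le> of_bool (j \<in> G) * N + th"
      using \<phi>_le[of j] by (auto simp: G_def)
  qed
  also have "\<dots> = real (card G) * N + real J * th"
  proof -
    have "{..<J} \<inter> {j. j \<in> G} = G" by (auto simp: G_def)
    then show ?thesis by (simp add: sum.distrib)
  qed
  finally have "h * \<bar>\<Sum>j<J. \<phi> j\<bar> \<le> h * (real (card G) * N + real J * th)"
    using h by (intro mult_left_mono) auto
  also have "\<dots> = h * real (card G) * N + a * N / 2"
    using C by (simp add: th_def distrib_left mult.assoc[symmetric] mult.commute[of h])
  finally have upper: "h * \<bar>\<Sum>j<J. \<phi> j\<bar> \<le> h * real (card G) * N + a * N / 2" .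
  have lower: "a * N - N * h \<le> h * \<bar>\<Sum>j<J. \<phi> j\<bar>"
  proof -
    have "\<bar>h * (\<Sum>j<J. \<phi> j) - (\<Sum>n\<in>A. f n * x n)\<bar> \<le> N * h"
      using grid_layer_cake[OF A(1) h, of x J f] x f C by (simp add: \<phi>_def N_def)
    moreover have "\<bar>h * (\<Sum>j<J. \<phi> j)\<bar> = h * \<bar>\<Sum>j<J. \<phi> j\<bar>" using h by (simp add: abs_mult)
    ultimately show ?thesis using corr unfolding N_def by linarith
  qed
  from lower upper have "(a / 2 - h) * N \<le> (h * real (card G)) * N" by (simp add: algebra_simps)
  then show ?thesis using N by (simp add: G_def th_def \<phi>_def N_def)
qed

lemma card_crowded_thresholds:
  fixes x :: "'a \<Rightarrow> real"
  assumes A: "finite A" and h: "h > 0" and e: "e \<ge> 0" and B: "B > 0"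
  shows "B * real (card {j. j < J \<and> B < real (card {n\<in>A. real j * h < x n \<and> x n < real j * h + e})})
           \<le> real (card A) * (e / h + 1)"
proof -
  define S where "S j = real (card {n\<in>A. real j * h < x n \<and> x n < real j * h + e})" for j
  define bad where "bad = {j. j < J \<and> B < S j}"
  have "B * real (card bad) = (\<Sum>j\<in>bad. B)" by simp
  also have "\<dots> \<le> (\<Sum>j\<in>bad. S j)" by (intro sum_mono) (simp add: bad_def)
  also have "\<dots> \<le> (\<Sum>j<J. S j)" by (intro sum_mono2) (auto simp: bad_def S_def)
  also have "\<dots> = (\<Sum>j<J. \<Sum>n\<in>A. of_bool (real j * h < x n \<and> x n < real j * h + e))"
    unfolding S_def using A by (simp only: card_filter_eq_sum_of_bool)
  also have "\<dots> = (\<Sum>n\<in>A. \<Sum>j<J. of_bool (x n - e < real j * h \<and> real j * h < x n))"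
    by (subst sum.swap) (simp add: algebra_simps conj_commute)
  also have "\<dots> = (\<Sum>n\<in>A. real (card {j\<in>{..<J}. x n - e < real j * h \<and> real j * h < x n}))"
    by (simp only: card_filter_eq_sum_of_bool finite_lessThan)
  also have "\<dots> \<le> (\<Sum>n\<in>A. e / h + 1)"
    by (intro sum_mono) (simp add: card_grid_window[OF h e])
  finally show ?thesis by (simp add: bad_def S_def)
qed

(* The factor k^2 * 2^k makes the union bound over all widths summable (card_crowded_union). *)
definition window_width :: "real \<Rightarrow> nat \<Rightarrow> real" where
  "window_width a k = a / (8 * (real k)\<^sup>2 * 2 ^ k)"

lemma window_width_pos: "a > 0 \<Longrightarrow> k \<ge> 1 \<Longrightarrow> window_width a k > 0"
  unfolding window_width_def by simp

lemma window_width_antimono: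
  assumes "a > 0" "1 \<le> k" "k \<le> l"
  shows "window_width a l \<le> window_width a k"
proof -
  have "8 * (real k)\<^sup>2 * 2 ^ k \<le> 8 * (real l)\<^sup>2 * 2 ^ l"
    using assms by (intro mult_mono power_mono power_increasing) auto
  then show ?thesis
    unfolding window_width_def using assms by (intro divide_left_mono) auto
qed

lemma card_crowded_union:
  fixes x :: "'a \<Rightarrow> real"
  assumes A: "finite A" "A \<noteq> {}" and a: "a > 0" and h: "h > 0"
    and hw: "\<forall>k\<in>{1..K}. h \<le> window_width a k"
  shows "h * real (card (\<Union>k\<in>{1..K}. {j. j < J \<and> real (card A) / (real k)\<^sup>2
           < real (card {n\<in>A. real j * h < x n \<and> x n < real j * h + window_width a k})}))
         \<le> a / 4"
proof -
  define crowded where "crowded k = {j. j < J \<and> real (card A) / (real k)\<^sup>2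
           < real (card {n\<in>A. real j * h < x n \<and> x n < real j * h + window_width a k})}" for k
  have crowded_le: "h * real (card (crowded k)) \<le> a / 4 * (1/2) ^ k" if k: "k \<in> {1..K}" for k
  proof -
    have w: "window_width a k > 0" "h \<le> window_width a k" using k a hw window_width_pos by auto
    have N: "real (card A) > 0" using A by (simp add: card_gt_0_iff)
    have "real (card A) / (real k)\<^sup>2 * real (card (crowded k))
        \<le> real (card A) * (window_width a k / h + 1)"
      unfolding crowded_def using N k w
      by (intro card_crowded_thresholds[OF A(1) h]) auto
    then have "real (card A) * (real (card (crowded k)) / (real k)\<^sup>2)
        \<le> real (card A) * (window_width a k / h + 1)" by simp
    then have "real (card (crowded k)) / (real k)\<^sup>2 \<le> window_width a k / h + 1"
      using N by (simp only: mult_le_cancel_left_pos)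
    then have "real (card (crowded k)) \<le> (real k)\<^sup>2 * (window_width a k / h + 1)"
      using k by (simp add: pos_divide_le_eq mult.commute)
    also have "\<dots> \<le> (real k)\<^sup>2 * (2 * window_width a k / h)"
      using w h by (intro mult_left_mono) (auto simp: field_simps)
    also have "\<dots> = a / (4 * h) * (1/2) ^ k"
      using k h by (simp add: window_width_def field_simps)
    finally show ?thesis using h by (simp add: field_simps)
  qed
  have "h * real (card (\<Union>k\<in>{1..K}. crowded k)) \<le> h * (\<Sum>k\<in>{1..K}. real (card (crowded k)))"
    using h card_UN_le[of "{1..K}" crowded] by (intro mult_left_mono) (simp_all flip: of_nat_sum)
  also have "\<dots> \<le> (\<Sum>k\<in>{1..K}. a / 4 * (1/2) ^ k)"
    unfolding sum_distrib_left using crowded_le by (intro sum_mono) auto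
  also have "\<dots> = a / 4 * (1 - (1/2) ^ K)"
    unfolding sum_distrib_left[symmetric] by (induction K) (simp_all add: field_simps)
  also have "\<dots> \<le> a / 4" using a by simp
  finally show ?thesis by (simp add: crowded_def)
qed

lemma exists_grid_step:
  fixes C m :: real
  assumes "C > 0" "m > 0"
  obtains J :: nat and h where "h > 0" "h \<le> m" "real J * h = C"
proof
  define J where "J = nat \<lceil>C / m\<rceil> + 1"
  have J: "real J > 0" "C / m \<le> real J" unfolding J_def by linarith+
  then show "C / real J > 0" "real J * (C / real J) = C" using assms by simp_all
  show "C / real J \<le> m" using J assms by (simp add: divide_le_eq mult.commute)
qed

lemma window_counts_beyond:
  fixes x :: "'a \<Rightarrow> real"
  assumes A: "finite A" and a: "a > 0" and K: "K \<ge> 1" "real (card A) < (real K)\<^sup>2"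
    and small: "\<forall>k\<in>{1..K}. real (card {n\<in>A. t < x n \<and> x n < t + window_width a k})
                              \<le> real (card A) / (real k)\<^sup>2"
  shows "\<forall>k\<ge>1. real (card {n\<in>A. t < x n \<and> x n < t + window_width a k}) \<le> real (card A) / (real k)\<^sup>2"
proof (intro allI impI)
  fix k :: nat assume k: "k \<ge> 1"
  define S where "S l = card {n\<in>A. t < x n \<and> x n < t + window_width a l}" for l
  show "real (S k) \<le> real (card A) / (real k)\<^sup>2" unfolding S_def[symmetric]
  proof (cases "k \<le> K")
    case True
    then show ?thesis using small k by (simp add: S_def)
  next
    case False
    have "real (S K) \<le> real (card A) / (real K)\<^sup>2" using small K(1) by (simp add: S_def)
    also have "\<dots> < 1" using K by simp
    finally have "S K = 0" by simp
    moreover have "S k \<le> S K"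
      unfolding S_def using window_width_antimono[OF a K(1), of k] False A
      by (intro card_mono) auto
    ultimately show ?thesis by simp
  qed
qed

lemma exists_regular_threshold:
  fixes f x :: "'a \<Rightarrow> real"
  assumes A: "finite A" "A \<noteq> {}" and a: "a > 0" and C: "C > 0"
    and x: "\<forall>n\<in>A. 0 \<le> x n \<and> x n \<le> C" and f: "\<forall>n\<in>A. \<bar>f n\<bar> \<le> 1"
    and corr: "a * real (card A) \<le> \<bar>\<Sum>n\<in>A. f n * x n\<bar>"
  shows "\<exists>t. a * real (card A) / (2 * C) \<le> \<bar>\<Sum>n\<in>A. f n * of_bool (t < x n)\<bar>
           \<and> (\<forall>k\<ge>1. real (card {n\<in>A. t < x n \<and> x n < t + window_width a k})
                      \<le> real (card A) / (real k)\<^sup>2)"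
proof -
  define N where "N = real (card A)"
  \<comment> \<open>N < K^2: a window of index K with at most N/K^2 points is empty, and so are all narrower ones.\<close>
  define K where "K = card A + 1"
  have K: "K \<ge> 1" "N < (real K)\<^sup>2"
  proof -
    show "K \<ge> 1" by (simp add: K_def)
    then have "real K \<le> (real K)\<^sup>2" by (simp add: power2_eq_square)
    moreover have "N < real K" by (simp add: K_def N_def)
    ultimately show "N < (real K)\<^sup>2" by linarith
  qed
  have "min (a / 8) (window_width a K) > 0" using a K window_width_pos by simp
  then obtain J h where h: "h > 0" "h \<le> min (a / 8) (window_width a K)" "real J * h = C"
    using exists_grid_step[OF C] by blast
  then have ha: "h \<le> a / 8" and hw: "\<forall>k\<in>{1..K}. h \<le> window_width a k"
    using window_width_antimono[OF a] by (force+)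
  define S where "S k j = real (card {n\<in>A. real j * h < x n \<and> x n < real j * h + window_width a k})"
    for k j
  define U where "U = (\<Union>k\<in>{1..K}. {j. j < J \<and> N / (real k)\<^sup>2 < S k j})"
  define G where "G = {j. j < J \<and> a * N / (2 * C) \<le> \<bar>\<Sum>n\<in>A. f n * of_bool (real j * h < x n)\<bar>}"
  have "h * real (card U) \<le> a / 4"
    using card_crowded_union[OF A a h(1) hw, of J x] by (simp add: U_def S_def N_def)
  moreover have "a / 2 - h \<le> h * real (card G)"
    using card_correlating_thresholds[OF A a h(1) C h(3) x f corr] by (simp add: G_def N_def)
  ultimately have "h * real (card U) < h * real (card G)" using ha a by linarith
  then have "card U < card G" using h by (simp add: mult_less_cancel_left_pos)
  moreover have "finite U" by (auto simp: U_def)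
  ultimately obtain j where j: "j \<in> G" "j \<notin> U" by (meson card_mono not_le subsetI)
  have "S k j \<le> N / (real k)\<^sup>2" if "k \<in> {1..K}" for k
  proof -
    have "\<not> (j < J \<and> N / (real k)\<^sup>2 < S k j)" using j(2) that unfolding U_def by blast
    then show ?thesis using j(1) by (auto simp: G_def)
  qed
  then have "\<forall>k\<ge>1. real (card {n\<in>A. real j * h < x n \<and> x n < real j * h + window_width a k})
               \<le> real (card A) / (real k)\<^sup>2"
    using K by (intro window_counts_beyond[OF A(1) a]) (auto simp: S_def N_def)
  moreover have "a * real (card A) / (2 * C) \<le> \<bar>\<Sum>n\<in>A. f n * of_bool (real j * h < x n)\<bar>"
    using j by (simp add: G_def N_def)
  ultimately show ?thesis by blast
qed

lemma rat_height_le_mono: "rat_height_le M r \<Longrightarrow> M \<le> M' \<Longrightarrow> rat_height_le M' r"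
  unfolding rat_height_le_def by (blast intro: order_trans)

lemma nil_complexity_le_mono: "nil_complexity_le M m c d \<Longrightarrow> M \<le> M' \<Longrightarrow> nil_complexity_le M' m c d"
  unfolding nil_complexity_le_def using rat_height_le_mono by (meson order_trans)

lemma poly_nilseq_norm_le:
  assumes "poly_nilseq s C \<psi>"
  shows "cmod (\<psi> x) \<le> C"
proof -
  obtain n m X c js d g F where
    nil: "malcev_nilmanifold n m X c js d" and g: "poly_seq n m X js g"
    and F: "lip_on_nilmanifold_le C n m X F" and \<psi>: "\<psi> = (\<lambda>x. F (g x))"
    using assms unfolding poly_nilseq_def by blast
  have "js 0 = 0" using nil unfolding malcev_nilmanifold_def by blast
  moreover have "iter_deriv n [] g x \<in> Gfil n m X js 0"
    using g unfolding poly_seq_def by (metis list.size(3))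
  ultimately have "g x \<in> Ggrp n m X" by (simp add: Gfil_def Ggrp_def)
  then show ?thesis using F \<psi> unfolding lip_on_nilmanifold_le_def by force
qed

lemma poly_nilseq_compose_lipschitz:
  fixes P :: "complex \<Rightarrow> real"
  assumes \<psi>: "poly_nilseq s C \<psi>" and "C \<le> C'" "0 \<le> K" "B + K * C \<le> C'"
    and P_bound: "\<forall>z. \<bar>P z\<bar> \<le> B" and P_lip: "\<forall>z w. \<bar>P z - P w\<bar> \<le> K * cmod (z - w)"
  shows "poly_nilseq s C' (\<lambda>x. complex_of_real (P (\<psi> x)))"
proof -
  obtain n m X c js d g F where w: "d \<le> s" "malcev_nilmanifold n m X c js d" "nil_complexity_le C m c d"
      "poly_seq n m X js g" and F: "lip_on_nilmanifold_le C n m X F" and \<psi>_eq: "\<psi> = (\<lambda>x. F (g x))"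
    using \<psi> unfolding poly_nilseq_def by blast
  obtain A L where AL: "0 \<le> L" "A + L \<le> C"
      "\<forall>x\<in>Ggrp n m X. \<forall>y\<in>Ggrp n m X. cmod (F x - F y) \<le> L * dQ n m X x y"
    and inv: "\<forall>x\<in>Ggrp n m X. \<forall>\<gamma>\<in>Gam n m X. F (mmul n x \<gamma>) = F x"
    and "0 \<le> A"
    using F unfolding lip_on_nilmanifold_le_def by blast
  have "lip_on_nilmanifold_le C' n m X (\<lambda>y. complex_of_real (P (F y)))"
    unfolding lip_on_nilmanifold_le_def
  proof (intro conjI ballI exI)
    show "complex_of_real (P (F (mmul n x \<gamma>))) = complex_of_real (P (F x))"
      if "x \<in> Ggrp n m X" "\<gamma> \<in> Gam n m X" for x \<gamma>
      using inv that by simp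
    show "0 \<le> B" using P_bound by (meson abs_ge_zero order_trans)
    show "0 \<le> K * L" using assms AL by simp
    have "K * L \<le> K * C" using AL \<open>0 \<le> A\<close> assms by (intro mult_left_mono) auto
    then show "B + K * L \<le> C'" using assms by linarith
    show "cmod (complex_of_real (P (F x))) \<le> B" for x using P_bound by simp
    fix x y assume "x \<in> Ggrp n m X" "y \<in> Ggrp n m X"
    then have "K * cmod (F x - F y) \<le> K * (L * dQ n m X x y)"
      using AL(3) assms(3) by (intro mult_left_mono) auto
    then show "cmod (complex_of_real (P (F x)) - complex_of_real (P (F y))) \<le> K * L * dQ n m X x y"
      using P_lip by (simp add: mult.assoc flip: of_real_diff) (meson order_trans)
  qed
  moreover have "nil_complexity_le C' m c d" using w(3) assms(2) by (rule nil_complexity_le_mono)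
  ultimately show ?thesis unfolding poly_nilseq_def \<psi>_eq using w(1,2,4) by blast
qed

lemma positive_part_lipschitz:
  fixes u :: "complex \<Rightarrow> real"
  assumes lip: "\<forall>z w. \<bar>u z - u w\<bar> \<le> cmod (z - w)" and bound: "\<forall>z. \<bar>u z\<bar> \<le> cmod z"
  shows "(\<forall>z w. \<bar>max (u z) 0 - max (u w) 0\<bar> \<le> cmod (z - w))
       \<and> (\<forall>z. 0 \<le> max (u z) 0 \<and> max (u z) 0 \<le> cmod z)"
proof (intro conjI allI)
  fix z w
  have "\<bar>max (u z) 0 - max (u w) 0\<bar> \<le> \<bar>u z - u w\<bar>" by (auto simp: max_def)
  then show "\<bar>max (u z) 0 - max (u w) 0\<bar> \<le> cmod (z - w)" using lip by (meson order_trans)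
next
  show "0 \<le> max (u z) 0" for z by simp
  show "max (u z) 0 \<le> cmod z" for z using bound abs_le_D1 by auto
qed

lemma exists_lipschitz_part_correlation:
  fixes f :: "'a \<Rightarrow> real" and \<psi> :: "'a \<Rightarrow> complex"
  assumes corr: "c \<le> cmod (\<Sum>n\<in>A. complex_of_real (f n) * cnj (\<psi> n))"
  shows "\<exists>P :: complex \<Rightarrow> real. (\<forall>z w. \<bar>P z - P w\<bar> \<le> cmod (z - w))
           \<and> (\<forall>z. 0 \<le> P z \<and> P z \<le> cmod z) \<and> c / 4 \<le> \<bar>\<Sum>n\<in>A. f n * P (\<psi> n)\<bar>"
proof -
  define s where "s u = (\<Sum>n\<in>A. f n * u (\<psi> n))" for u :: "complex \<Rightarrow> real"
  define pos where "pos u z = max (u z) 0" for u :: "complex \<Rightarrow> real" and z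
  define parts where "parts = {pos Re, pos (\<lambda>z. - Re z), pos Im, pos (\<lambda>z. - Im z)}"
  have split: "\<bar>s u\<bar> \<le> \<bar>s (pos u)\<bar> + \<bar>s (pos (\<lambda>z. - u z))\<bar>" for u
  proof -
    have "s u = s (pos u) - s (pos (\<lambda>z. - u z))"
      unfolding s_def sum_subtractf[symmetric]
      by (intro sum.cong) (auto simp: pos_def max_def algebra_simps)
    then show ?thesis by linarith
  qed
  have "c \<le> \<bar>s Re\<bar> + \<bar>s Im\<bar>"
  proof -
    define S where "S = (\<Sum>n\<in>A. complex_of_real (f n) * cnj (\<psi> n))"
    have "Re S = s Re" "Im S = - s Im" by (simp_all add: S_def s_def sum_negf)
    then show ?thesis using corr cmod_le[of S] by (simp add: S_def)
  qed
  then have "c \<le> \<bar>s (pos Re)\<bar> + \<bar>s (pos (\<lambda>z. - Re z))\<bar> + \<bar>s (pos Im)\<bar> + \<bar>s (pos (\<lambda>z. - Im z))\<bar>"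
    using split[of Re] split[of Im] by linarith
  then have "\<exists>P\<in>parts. c / 4 \<le> \<bar>s P\<bar>" unfolding parts_def by (auto simp: not_le)
  then obtain P where "P \<in> parts" "c / 4 \<le> \<bar>s P\<bar>" by blast
  moreover have "(\<forall>z w. \<bar>P z - P w\<bar> \<le> cmod (z - w)) \<and> (\<forall>z. 0 \<le> P z \<and> P z \<le> cmod z)"
    if "P \<in> parts" for P
  proof -
    have pos_lip: "(\<forall>z w. \<bar>pos u z - pos u w\<bar> \<le> cmod (z - w)) \<and> (\<forall>z. 0 \<le> pos u z \<and> pos u z \<le> cmod z)"
      if "\<forall>z w. \<bar>u z - u w\<bar> \<le> cmod (z - w)" "\<forall>z. \<bar>u z\<bar> \<le> cmod z" for u
      unfolding pos_def using that by (rule positive_part_lipschitz)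
    have "\<bar>Re z - Re w\<bar> \<le> cmod (z - w)" "\<bar>Im z - Im w\<bar> \<le> cmod (z - w)" for z w
      using abs_Re_le_cmod[of "z - w"] abs_Im_le_cmod[of "z - w"] by simp_all
    moreover have "\<bar>- a - - b\<bar> = \<bar>a - b\<bar>" for a b :: real by arith
    ultimately show ?thesis
      using that pos_lip[of Re] pos_lip[of "\<lambda>z. - Re z"] pos_lip[of Im] pos_lip[of "\<lambda>z. - Im z"]
        abs_Re_le_cmod abs_Im_le_cmod
      unfolding parts_def by (simp only: abs_minus_cancel insert_iff empty_iff) blast
  qed
  ultimately show ?thesis unfolding s_def by blast
qed

lemma one_le_nat_ceiling: "(0::real) < M \<Longrightarrow> 1 \<le> nat \<lceil>M\<rceil>"
  by linarith

(* Approximating E to within 1/M uses the ramp of width window_width a k, k = ceil M, whose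
   Lipschitz constant 1/window_width a k raises the complexity C to C + C / window_width a k. *)
definition measurability_growth :: "real \<Rightarrow> real \<Rightarrow> real \<Rightarrow> real" where
  "measurability_growth C a M = C + 1 + C / window_width a (nat \<lceil>M\<rceil>) + \<bar>M\<bar>"

lemma growth_function_measurability_growth:
  assumes C: "C \<ge> 0" and a: "a > 0"
  shows "growth_function (measurability_growth C a)"
  unfolding growth_function_def
proof (intro conjI allI impI mono_onI)
  fix r q :: real assume r: "r \<in> {0<..}" "q \<in> {0<..}" "r \<le> q"
  have rq: "1 \<le> nat \<lceil>r\<rceil>" "nat \<lceil>r\<rceil> \<le> nat \<lceil>q\<rceil>"
    using r(1) one_le_nat_ceiling[of r] nat_mono[OF ceiling_mono[OF r(3)]] by auto
  have "window_width a (nat \<lceil>q\<rceil>) \<le> window_width a (nat \<lceil>r\<rceil>)"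
    using rq by (rule window_width_antimono[OF a])
  moreover have "0 < window_width a (nat \<lceil>q\<rceil>)" using rq by (intro window_width_pos[OF a]) linarith
  ultimately have "C / window_width a (nat \<lceil>r\<rceil>) \<le> C / window_width a (nat \<lceil>q\<rceil>)"
    using C by (intro divide_left_mono) auto
  then show "measurability_growth C a r \<le> measurability_growth C a q"
    using r by (simp add: measurability_growth_def)
next
  fix M :: real assume "M > 0"
  moreover have "0 \<le> C / window_width a (nat \<lceil>M\<rceil>)"
    using C window_width_pos[OF a one_le_nat_ceiling[OF \<open>M > 0\<close>]] by (intro divide_nonneg_pos)
  ultimately show "measurability_growth C a M > 0" "measurability_growth C a M \<ge> M"
    using C by (auto simp: measurability_growth_def)
qed

lemma ramp_indicator_error:
  fixes y t \<epsilon> :: real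
  assumes "\<epsilon> > 0"
  shows "\<bar>min 1 (max 0 ((y - t) / \<epsilon>)) - of_bool (t < y)\<bar> \<le> of_bool (t < y \<and> y < t + \<epsilon>)"
proof (cases "t < y \<and> y < t + \<epsilon>")
  case False
  moreover have "(y - t) / \<epsilon> \<le> 0" if "y \<le> t" using that assms by (simp add: divide_nonpos_pos)
  moreover have "1 \<le> (y - t) / \<epsilon>" if "t + \<epsilon> \<le> y" using that assms by (simp add: pos_le_divide_eq)
  ultimately show ?thesis by (auto simp: not_less)
qed auto

lemma L2dist_ramp_indicator_le:
  fixes y :: "int \<Rightarrow> real"
  assumes \<epsilon>: "\<epsilon> > 0"
    and sparse: "real (card {n\<in>{1..int N}. t < y n \<and> y n < t + \<epsilon>}) \<le> real N / (real k)\<^sup>2"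
  shows "L2dist N (\<lambda>n. complex_of_real (min 1 (max 0 ((y n - t) / \<epsilon>))))
           (\<lambda>n. complex_of_real (indicator {n\<in>{1..int N}. t < y n} n)) \<le> 1 / real k"
proof -
  define err where "err n = (cmod (complex_of_real (min 1 (max 0 ((y n - t) / \<epsilon>)))
                              - complex_of_real (indicator {n\<in>{1..int N}. t < y n} n)))\<^sup>2" for n
  have "err n \<le> of_bool (t < y n \<and> y n < t + \<epsilon>)" if "n \<in> {1..int N}" for n
  proof -
    have "\<bar>min 1 (max 0 ((y n - t) / \<epsilon>)) - of_bool (t < y n)\<bar> \<le> of_bool (t < y n \<and> y n < t + \<epsilon>)"
      (is "?d \<le> ?b") using \<epsilon> by (rule ramp_indicator_error)
    then have "?d\<^sup>2 \<le> ?b\<^sup>2" by (rule power_mono) simp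
    moreover have "?b\<^sup>2 = ?b" by (cases "t < y n \<and> y n < t + \<epsilon>") simp_all
    ultimately have "?d\<^sup>2 \<le> ?b" by linarith
    then show ?thesis using that by (simp add: err_def indicator_def flip: of_real_diff)
  qed
  then have "(\<Sum>n\<in>{1..int N}. err n) \<le> (\<Sum>n\<in>{1..int N}. of_bool (t < y n \<and> y n < t + \<epsilon>))"
    by (rule sum_mono)
  also have "\<dots> = real (card {n\<in>{1..int N}. t < y n \<and> y n < t + \<epsilon>})"
    by (simp only: card_filter_eq_sum_of_bool finite_atLeastAtMost_int)
  finally have "(\<Sum>n\<in>{1..int N}. err n) / real N \<le> 1 / (real k)\<^sup>2"
    using sparse by (cases "N = 0") (simp_all add: divide_le_eq)
  then have "sqrt ((\<Sum>n\<in>{1..int N}. err n) / real N) \<le> sqrt (1 / (real k)\<^sup>2)"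
    by (rule real_sqrt_le_mono)
  also have "\<dots> = 1 / real k" by (simp add: real_sqrt_divide)
  finally show ?thesis by (simp add: L2dist_def err_def)
qed

lemma s_measurable_superlevel_set:
  fixes P :: "complex \<Rightarrow> real" and \<psi> :: "int \<Rightarrow> complex"
  assumes \<psi>: "poly_nilseq s C \<psi>" and a: "a > 0"
    and P: "\<forall>z w. \<bar>P z - P w\<bar> \<le> cmod (z - w)"
    and sparse: "\<forall>k\<ge>1. real (card {n\<in>{1..int N}. t < P (\<psi> n) \<and> P (\<psi> n) < t + window_width a k})
                         \<le> real N / (real k)\<^sup>2"
  shows "s_measurable s (measurability_growth C a) N {n\<in>{1..int N}. t < P (\<psi> n)}"
  unfolding s_measurable_def
proof (intro conjI allI impI)
  let ?E = "{n\<in>{1..int N}. t < P (\<psi> n)}"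
  show "?E \<subseteq> {1..int N}" by auto
  fix M :: real assume M: "M \<ge> 1"
  define k where "k = nat \<lceil>M\<rceil>"
  have k: "1 \<le> k" "M \<le> real k"
    using M one_le_nat_ceiling[of M] le_of_int_ceiling[of M] by (auto simp: k_def)
  define \<epsilon> where "\<epsilon> = window_width a k"
  have \<epsilon>: "\<epsilon> > 0" using window_width_pos[OF a k(1)] by (simp add: \<epsilon>_def)
  define Q where "Q z = min 1 (max 0 ((P z - t) / \<epsilon>))" for z
  have C: "0 \<le> C" using norm_ge_zero poly_nilseq_norm_le[OF \<psi>, of 0] by (rule order_trans)
  have "poly_nilseq s (measurability_growth C a M) (\<lambda>n. complex_of_real (Q (\<psi> n)))"
  proof (rule poly_nilseq_compose_lipschitz[OF \<psi>])
    have "0 \<le> C / \<epsilon>" using C \<epsilon> by simp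
    moreover have "measurability_growth C a M = C + 1 + C / \<epsilon> + \<bar>M\<bar>"
      by (simp add: measurability_growth_def \<epsilon>_def k_def)
    ultimately show "C \<le> measurability_growth C a M" "1 + 1 / \<epsilon> * C \<le> measurability_growth C a M"
      using C by auto
    show "0 \<le> 1 / \<epsilon>" using \<epsilon> by simp
    show "\<forall>z. \<bar>Q z\<bar> \<le> 1" by (simp add: Q_def)
    show "\<forall>z w. \<bar>Q z - Q w\<bar> \<le> 1 / \<epsilon> * cmod (z - w)"
    proof (intro allI)
      fix z w
      have "\<bar>Q z - Q w\<bar> \<le> \<bar>(P z - t) / \<epsilon> - (P w - t) / \<epsilon>\<bar>"
        unfolding Q_def by (auto simp: max_def min_def)
      also have "\<dots> = \<bar>P z - P w\<bar> / \<epsilon>" using \<epsilon> by (simp add: diff_divide_distrib[symmetric])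
      also have "\<dots> \<le> cmod (z - w) / \<epsilon>" using P \<epsilon> by (intro divide_right_mono) auto
      finally show "\<bar>Q z - Q w\<bar> \<le> 1 / \<epsilon> * cmod (z - w)" by simp
    qed
  qed
  moreover have "\<forall>n. complex_of_real (Q (\<psi> n)) \<in> complex_of_real ` {0..1}" by (simp add: Q_def)
  moreover have "L2dist N (\<lambda>n. complex_of_real (Q (\<psi> n))) (\<lambda>n. complex_of_real (indicator ?E n))
      \<le> 1 / real k"
    unfolding Q_def using sparse k(1) by (intro L2dist_ramp_indicator_le[OF \<epsilon>]) (simp add: \<epsilon>_def)
  moreover have "1 / real k \<le> 1 / M" using k M by (intro divide_left_mono) auto
  ultimately show "\<exists>\<psi>. poly_nilseq s (measurability_growth C a M) \<psi> \<and> (\<forall>x. \<psi> x \<in> complex_of_real ` {0..1})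
      \<and> L2dist N \<psi> (\<lambda>n. complex_of_real (indicator ?E n)) \<le> 1 / M"
    by (blast intro: order_trans)
qed

lemma correlation_gives_measurable_set:
  fixes f :: "int \<Rightarrow> real"
  assumes \<psi>: "poly_nilseq s C \<psi>" and C: "C > 0" and c: "c > 0" and N: "N \<ge> 1"
    and f: "\<forall>n\<in>{1..int N}. \<bar>f n\<bar> \<le> 1"
    and corr: "c \<le> cmod ((\<Sum>n\<in>{1..int N}. complex_of_real (f n) * cnj (\<psi> n)) / of_nat N)"
  shows "\<exists>E. E \<subseteq> {1..int N} \<and> s_measurable s (measurability_growth C (c / 4)) N E
           \<and> c / (8 * C) \<le> \<bar>(\<Sum>n\<in>{1..int N}. f n * indicator E n) / real N\<bar>"
proof -
  have "c * real N \<le> cmod (\<Sum>n\<in>{1..int N}. complex_of_real (f n) * cnj (\<psi> n))"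
    using corr N by (simp add: norm_divide pos_le_divide_eq)
  then obtain P :: "complex \<Rightarrow> real" where P_lip: "\<forall>z w. \<bar>P z - P w\<bar> \<le> cmod (z - w)"
    and P_bound: "\<forall>z. 0 \<le> P z \<and> P z \<le> cmod z"
    and P_corr: "c * real N / 4 \<le> \<bar>\<Sum>n\<in>{1..int N}. f n * P (\<psi> n)\<bar>"
    using exists_lipschitz_part_correlation by blast
  have "\<forall>n\<in>{1..int N}. 0 \<le> P (\<psi> n) \<and> P (\<psi> n) \<le> C"
    using P_bound poly_nilseq_norm_le[OF \<psi>] by (meson order_trans)
  moreover have "c / 4 * real (card {1..int N}) \<le> \<bar>\<Sum>n\<in>{1..int N}. f n * P (\<psi> n)\<bar>"
    using P_corr by simp
  ultimately obtain t where t_corr: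
      "c / 4 * real N / (2 * C) \<le> \<bar>\<Sum>n\<in>{1..int N}. f n * of_bool (t < P (\<psi> n))\<bar>"
    and t_sparse: "\<forall>k\<ge>1. real (card {n\<in>{1..int N}. t < P (\<psi> n) \<and> P (\<psi> n) < t + window_width (c / 4) k})
                          \<le> real N / (real k)\<^sup>2"
    using exists_regular_threshold[of "{1..int N}" "c / 4" C "\<lambda>n. P (\<psi> n)" f] N c C f by auto
  define E where "E = {n\<in>{1..int N}. t < P (\<psi> n)}"
  have "(\<Sum>n\<in>{1..int N}. f n * indicator E n) = (\<Sum>n\<in>{1..int N}. f n * of_bool (t < P (\<psi> n)))"
    by (intro sum.cong) (auto simp: E_def indicator_def)
  then have "c / (8 * C) \<le> \<bar>(\<Sum>n\<in>{1..int N}. f n * indicator E n) / real N\<bar>"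
    using t_corr N by (simp add: pos_le_divide_eq field_simps)
  moreover have "s_measurable s (measurability_growth C (c / 4)) N E"
    unfolding E_def using \<psi> c P_lip t_sparse by (intro s_measurable_superlevel_set) auto
  moreover have "E \<subseteq> {1..int N}" by (auto simp: E_def)
  ultimately show ?thesis by blast
qed

theorem mainTheorem7:
  assumes "GI"
  shows "\<forall>s\<ge>(1::nat). \<forall>\<delta>>(0::real). \<exists>\<Phi> c'. growth_function \<Phi> \<and> c' > 0 \<and>
    (\<forall>N\<ge>(1::nat). \<forall>f :: int \<Rightarrow> real.
       (\<forall>n\<in>{1..int N}. \<bar>f n\<bar> \<le> 1) \<longrightarrow> gowersN (s + 1) N (\<lambda>n. of_real (f n)) \<ge> \<delta> \<longrightarrow>
       (\<exists>E. E \<subseteq> {1..int N} \<and> s_measurable s \<Phi> N E \<and>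
            \<bar>(\<Sum>n\<in>{1..int N}. f n * indicator E n) / real N\<bar> \<ge> c'))"
proof (intro allI impI)
  fix s :: nat and \<delta> :: real assume "s \<ge> 1" "\<delta> > 0"
  then obtain C c where C: "C > 0" and c: "c > 0" and inverse: "\<forall>N\<ge>1. \<forall>f :: int \<Rightarrow> complex.
      (\<forall>n\<in>{1..int N}. cmod (f n) \<le> 1) \<longrightarrow> gowersN (s + 1) N f \<ge> \<delta> \<longrightarrow>
      (\<exists>\<psi>. poly_nilseq s C \<psi> \<and> cmod ((\<Sum>n\<in>{1..int N}. f n * cnj (\<psi> n)) / of_nat N) \<ge> c)"
    using assms unfolding GI_def by blast
  show "\<exists>\<Phi> c'. growth_function \<Phi> \<and> c' > 0 \<and>
    (\<forall>N\<ge>(1::nat). \<forall>f :: int \<Rightarrow> real.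
       (\<forall>n\<in>{1..int N}. \<bar>f n\<bar> \<le> 1) \<longrightarrow> gowersN (s + 1) N (\<lambda>n. of_real (f n)) \<ge> \<delta> \<longrightarrow>
       (\<exists>E. E \<subseteq> {1..int N} \<and> s_measurable s \<Phi> N E \<and>
            \<bar>(\<Sum>n\<in>{1..int N}. f n * indicator E n) / real N\<bar> \<ge> c'))"
  proof (intro exI[of _ "measurability_growth C (c / 4)"] exI[of _ "c / (8 * C)"] conjI allI impI)
    show "growth_function (measurability_growth C (c / 4))"
      using C c by (intro growth_function_measurability_growth) auto
    show "c / (8 * C) > 0" using C c by simp
    fix N :: nat and f :: "int \<Rightarrow> real"
    assume N: "N \<ge> 1" and f: "\<forall>n\<in>{1..int N}. \<bar>f n\<bar> \<le> 1"
      and "gowersN (s + 1) N (\<lambda>n. of_real (f n)) \<ge> \<delta>"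
    then obtain \<psi> where "poly_nilseq s C \<psi>"
      and "c \<le> cmod ((\<Sum>n\<in>{1..int N}. complex_of_real (f n) * cnj (\<psi> n)) / of_nat N)"
      using inverse[rule_format, of N "\<lambda>n. complex_of_real (f n)"] by auto
    then show "\<exists>E. E \<subseteq> {1..int N} \<and> s_measurable s (measurability_growth C (c / 4)) N E
        \<and> c / (8 * C) \<le> \<bar>(\<Sum>n\<in>{1..int N}. f n * indicator E n) / real N\<bar>"
      using C c N f by (intro correlation_gives_measurable_set) auto
  qed
qed

end
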